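(* Let $A$ be a finite tree rooted at $e$, with all arcs directed from the root towards the leaves, and let $R\subseteq V(A)$ be a set of destinations containing all leaves of $A$. Let $u\neq e$ be a vertex of $A$ having $\ell$ children $u_1,\dots,u_\ell$, and let $D\subseteq V(A)$. If $D$ is sub-optimal for $u$, then $D$ is sub-optimal for $u_i$ for every $i$, $1\le i\le\ell$.
   Context: Setting (multicast with diffusing nodes): $A$ is a multicast tree for a request $(e,R)$: a tree rooted at the source $e$, arcs directed away from $e$, whose leaves lie in the destination set $R$. A set $D\subseteq V(A)$ is a set of diffusing (branching) nodes. The solution $\mathcal{S}(D)$ is a set of directed paths in $A$ such that: every node of $R$ is the final extremity of exactly one path; every node of $D$ is the final extremity of at most one path; the origin of each path is either $e$ or a node of $D$ which is itself the final extremity of some path; a node of $D$ lies on a path only as its origin or final extremity. As in the paper, $\mathcal{S}(D)$ is taken to be the solution in which each vertex $x\neq e$ of $R\cup D$ is the final extremity of exactly one path, whose origin is the nearest proper ancestor of $x$ belonging to $D\cup\{e\}$. For a vertex $u$, $A^u$ is the subtree of $A$ rooted at $u$, and for $u\neq e$, $a^u$ is the arc joining the parent of $u$ to $u$. The path number $\mathrm{pn}(u)$ is the number of paths of $\mathcal{S}(D)$ that pass through $u$ or terminate at $u$. The window of $\mathcal{S}(D)$ on arc $a^u$ is the triple $(\mathrm{pn}(u),\ |D\cap V(A^u)|,\ \mathrm{load})$, where $\mathrm{load}=\sum_{w\in V(A^u)}\mathrm{pn}(w)$ is the load of $\mathcal{S}(D)$ in $A^u$ (the number of pairs (path, arc)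 with the path using the arc, over the arcs of $A^u$ together with $a^u$). Sub-optimality: $D$ is sub-optimal for a vertex $u\neq e$ (i.e. for $A^u$) iff for every $D'\subseteq V(A)$ whose window $(b',d',\mathrm{load}')$ on $a^u$ satisfies $b'=b$ and $d'=d$, one has $\mathrm{load}\le\mathrm{load}'$, where $(b,d,\mathrm{load})$ is the window of $\mathcal{S}(D)$ on $a^u$. *)

theory Defs
  imports Main
begin

text \<open>A rooted tree with vertex set V, root e, and parent function par
  (par v is the parent of v for v in V, v distinct from e; par e is irrelevant).
  Arcs are directed from the parent to the child.\<close>

definition arcs :: "'a set \<Rightarrow> ('a \<Rightarrow> 'a) \<Rightarrow> 'a \<Rightarrow> ('a \<times> 'a) set" where
  "arcs V par e = {(par v, v) | v. v \<in> V \<and> v \<noteq> e}"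

definition rooted_tree :: "'a set \<Rightarrow> ('a \<Rightarrow> 'a) \<Rightarrow> 'a \<Rightarrow> bool" where
  "rooted_tree V par e \<longleftrightarrow> finite V \<and> e \<in> V \<and> (\<forall>v \<in> V - {e}. par v \<in> V)
     \<and> (\<forall>v \<in> V. (e, v) \<in> (arcs V par e)\<^sup>*)"

definition subtree :: "'a set \<Rightarrow> ('a \<Rightarrow> 'a) \<Rightarrow> 'a \<Rightarrow> 'a \<Rightarrow> 'a set" where
  "subtree V par e u = {w. (u, w) \<in> (arcs V par e)\<^sup>*}"

definition children :: "'a set \<Rightarrow> ('a \<Rightarrow> 'a) \<Rightarrow> 'a \<Rightarrow> 'a \<Rightarrow> 'a set" where
  "children V par e u = {v \<in> V. v \<noteq> e \<and> par v = u}"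

definition leaves :: "'a set \<Rightarrow> ('a \<Rightarrow> 'a) \<Rightarrow> 'a \<Rightarrow> 'a set" where
  "leaves V par e = {v \<in> V. children V par e v = {}}"

text \<open>Origin of the path of S(D) ending at x (x distinct from e): the nearest
  proper ancestor of x belonging to D \<union> {e}.\<close>
definition orig :: "('a \<Rightarrow> 'a) \<Rightarrow> 'a \<Rightarrow> 'a set \<Rightarrow> 'a \<Rightarrow> 'a" where
  "orig par e D x = (par ^^ (LEAST k. k \<ge> 1 \<and> (par ^^ k) x \<in> D \<union> {e})) x"

text \<open>Path number pn(w) of S(D): the number of paths of S(D) that pass through w
  or terminate at w, i.e. that use the arc a^w.  The path ending at x runs from
  orig x down to x; it uses a^w iff x is in A^w and
  orig x is a proper ancestor of w.\<close>
definition path_number :: "'a set \<Rightarrow> ('a \<Rightarrow> 'a) \<Rightarrow> 'a \<Rightarrow> 'a set \<Rightarrow> 'a set \<Rightarrow> 'a \<Rightarrow> nat" where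
  "path_number V par e R D w =
     card {x \<in> (R \<union> D) - {e}. x \<in> subtree V par e w \<and>
                              (orig par e D x, w) \<in> (arcs V par e)\<^sup>+}"

definition load :: "'a set \<Rightarrow> ('a \<Rightarrow> 'a) \<Rightarrow> 'a \<Rightarrow> 'a set \<Rightarrow> 'a set \<Rightarrow> 'a \<Rightarrow> nat" where
  "load V par e R D u = (\<Sum>w \<in> subtree V par e u. path_number V par e R D w)"

definition window :: "'a set \<Rightarrow> ('a \<Rightarrow> 'a) \<Rightarrow> 'a \<Rightarrow> 'a set \<Rightarrow> 'a set \<Rightarrow> 'a \<Rightarrow> nat \<times> nat \<times> nat" where
  "window V par e R D u =
     (path_number V par e R D u, card (D \<inter> subtree V par e u), load V par e R D u)"

definition sub_optimal :: "'a set \<Rightarrow> ('a \<Rightarrow> 'a) \<Rightarrow> 'a \<Rightarrow> 'a set \<Rightarrow> 'a set \<Rightarrow> 'a \<Rightarrow> bool" where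
  "sub_optimal V par e R D u \<longleftrightarrow>
     (\<forall>D' \<subseteq> V.
        (case window V par e R D u of (b, d, l) \<Rightarrow>
          case window V par e R D' u of (b', d', l') \<Rightarrow>
            (b' = b \<and> d' = d \<longrightarrow> l \<le> l')))"

end

theory Submission
  imports Defs
begin

text \<open>
  Whether the path of S(D) ending at x uses the arc a^w depends only on D \<inter> A^w: it does
  exactly when no diffusing node lies on the tree path from w (inclusive) to x (exclusive).
  So if some D' had the same path number and number of diffusing nodes as D on a^v but a
  smaller load, replacing D \<inter> A^v by D' \<inter> A^v would keep pn(u) (the paths through u that
  end in A^v are those through v, unless u is diffusing), keep every other path number in
  A^u - A^v, keep |D \<inter> A^u|, and lower the load in A^u by as much as in A^v, contradicting
  sub-optimality of D for u.
\<close>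

lemma arcs_ancestors_comparable:
  assumes "(a, x) \<in> (arcs V par e)\<^sup>*" and "(b, x) \<in> (arcs V par e)\<^sup>*"
  shows "(a, b) \<in> (arcs V par e)\<^sup>* \<or> (b, a) \<in> (arcs V par e)\<^sup>*"
  using assms
proof (induction arbitrary: b rule: rtrancl_induct)
  case base
  then show ?case by simp
next
  case (step y z)
  from step.prems show ?case
  proof (cases rule: rtranclE)
    case base
    then show ?thesis using step.hyps by auto
  next
    case (step y')
    then have "y' = y" using step.hyps(2) by (auto simp: arcs_def)
    then show ?thesis using step.IH step by auto
  qed
qed

lemma card_Int_agree_outside:
  assumes "finite B" and "C \<subseteq> B" and "D1 - C = D2 - C"
  shows "card (D1 \<inter> B) + card (D2 \<inter> C) = card (D2 \<inter> B) + card (D1 \<inter> C)"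
proof -
  have "card (D \<inter> B) = card (D \<inter> C) + card (D \<inter> B - C)" for D
  proof -
    have "D \<inter> B \<inter> C = D \<inter> C" using assms(2) by blast
    then show ?thesis using card_Int_Diff[of "D \<inter> B" C] assms(1) by simp
  qed
  moreover have "D1 \<inter> B - C = D2 \<inter> B - C" using assms(3) by blast
  ultimately show ?thesis by simp
qed

lemma sub_optimal_iff:
  "sub_optimal V par e R D u \<longleftrightarrow>
    (\<forall>D' \<subseteq> V. path_number V par e R D' u = path_number V par e R D u \<and>
       card (D' \<inter> subtree V par e u) = card (D \<inter> subtree V par e u) \<longrightarrow>
       load V par e R D u \<le> load V par e R D' u)"
  by (simp add: sub_optimal_def window_def)

definition depth :: "('a \<Rightarrow> 'a) \<Rightarrow> 'a \<Rightarrow> 'a \<Rightarrow> nat" where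
  "depth par e v = (LEAST k. (par ^^ k) v = e)"

locale multicast_tree =
  fixes V :: "'a set" and par :: "'a \<Rightarrow> 'a" and e :: 'a
  assumes rooted: "rooted_tree V par e"
begin

abbreviation T :: "('a \<times> 'a) set" where "T \<equiv> arcs V par e"

abbreviation A :: "'a \<Rightarrow> 'a set" where "A \<equiv> subtree V par e"

lemma in_arcs_iff: "(a, b) \<in> T \<longleftrightarrow> b \<in> V \<and> b \<noteq> e \<and> a = par b"
  by (auto simp: arcs_def)

lemma ancestor_of_root: "(a, e) \<in> T\<^sup>* \<Longrightarrow> a = e"
  by (erule rtranclE) (auto simp: in_arcs_iff)

lemma par_mem: "v \<in> V \<Longrightarrow> v \<noteq> e \<Longrightarrow> par v \<in> V"
  using rooted by (auto simp: rooted_tree_def)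

lemma subtree_subset: "w \<in> V \<Longrightarrow> A w \<subseteq> V"
proof
  fix x assume "w \<in> V" "x \<in> A w"
  then have "(w, x) \<in> T\<^sup>*" by (simp add: subtree_def)
  then show "x \<in> V" using \<open>w \<in> V\<close>
    by (induction rule: rtrancl_induct) (auto simp: in_arcs_iff)
qed

lemma finite_subtree: "w \<in> V \<Longrightarrow> finite (A w)"
  using rooted finite_subset[OF subtree_subset] by (simp add: rooted_tree_def)

lemma root_not_in_subtree: "w \<noteq> e \<Longrightarrow> e \<notin> A w"
  using ancestor_of_root by (auto simp: subtree_def)

lemma par_iterate_reaches_root: "v \<in> V \<Longrightarrow> \<exists>k. (par ^^ k) v = e"
proof -
  assume "v \<in> V"
  then have "(e, v) \<in> T\<^sup>*" using rooted by (auto simp: rooted_tree_def)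
  then show ?thesis
  proof (induction rule: rtrancl_induct)
    case base
    show ?case by (rule exI[of _ 0]) simp
  next
    case (step y z)
    then obtain k where "(par ^^ k) y = e" by auto
    moreover have "y = par z" using step.hyps(2) by (simp add: in_arcs_iff)
    ultimately have "(par ^^ Suc k) z = e" by (simp only: funpow_Suc_right comp_def)
    then show ?case by blast
  qed
qed

lemma par_iterate_depth: "v \<in> V \<Longrightarrow> (par ^^ depth par e v) v = e"
  unfolding depth_def using par_iterate_reaches_root by (rule LeastI_ex)

lemma depth_root: "depth par e e = 0"
  by (simp add: depth_def)

lemma depth_par:
  assumes "v \<in> V" and "v \<noteq> e"
  shows "depth par e v = Suc (depth par e (par v))"
proof -
  have "par v \<in> V" using par_mem assms .
  have at_v: "(par ^^ depth par e v) v = e" using par_iterate_depth assms(1) .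
  then have "depth par e v \<noteq> 0" using assms(2) by (metis funpow_0)
  then obtain n where n: "depth par e v = Suc n" by (cases "depth par e v") auto
  then have "(par ^^ n) (par v) = e" using at_v by (simp only: funpow_Suc_right comp_def)
  then have "depth par e (par v) \<le> n" unfolding depth_def by (rule Least_le)
  moreover have "(par ^^ Suc (depth par e (par v))) v = e"
    using par_iterate_depth[OF \<open>par v \<in> V\<close>] by (simp only: funpow_Suc_right comp_def)
  then have "depth par e v \<le> Suc (depth par e (par v))" unfolding depth_def by (rule Least_le)
  ultimately show ?thesis using n by simp
qed

lemma depth_arc: "(a, b) \<in> T \<Longrightarrow> depth par e b = Suc (depth par e a)"
  using depth_par by (auto simp: in_arcs_iff)

lemma depth_less: "(a, b) \<in> T\<^sup>+ \<Longrightarrow> depth par e a < depth par e b"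
  by (induction rule: trancl_induct) (auto dest: depth_arc)

lemma ancestor_antisym: "(a, b) \<in> T\<^sup>* \<Longrightarrow> (b, a) \<in> T\<^sup>* \<Longrightarrow> a = b"
  by (metis depth_less less_asym rtranclD)

lemma par_iterate_ancestor:
  "x \<in> V \<Longrightarrow> k \<le> depth par e x \<Longrightarrow>
   (par ^^ k) x \<in> V \<and> ((par ^^ k) x, x) \<in> T\<^sup>* \<and> depth par e ((par ^^ k) x) + k = depth par e x"
proof (induction k)
  case 0
  then show ?case by simp
next
  case (Suc k)
  then have IH: "(par ^^ k) x \<in> V" "((par ^^ k) x, x) \<in> T\<^sup>*"
    "depth par e ((par ^^ k) x) + k = depth par e x"
    by auto
  have "(par ^^ k) x \<noteq> e" using IH(3) Suc.prems depth_root by auto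
  then have arc: "((par ^^ Suc k) x, (par ^^ k) x) \<in> T" using IH(1) by (simp add: in_arcs_iff)
  have "(par ^^ Suc k) x \<in> V" using par_mem IH(1) \<open>(par ^^ k) x \<noteq> e\<close> by simp
  moreover have "((par ^^ Suc k) x, x) \<in> T\<^sup>*" using arc IH(2) by (rule converse_rtrancl_into_rtrancl)
  ultimately show ?case using IH(3) depth_arc[OF arc] by simp
qed

lemma ancestor_par_iterate:
  "(y, x) \<in> T\<^sup>* \<Longrightarrow> \<exists>j. y = (par ^^ j) x \<and> depth par e y + j = depth par e x"
proof (induction rule: converse_rtrancl_induct)
  case base
  show ?case by (rule exI[of _ 0]) simp
next
  case (step y z)
  then obtain j where "z = (par ^^ j) x" "depth par e z + j = depth par e x" by auto
  then have "y = (par ^^ Suc j) x \<and> depth par e y + Suc j = depth par e x"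
    using step.hyps(1) depth_arc[OF step.hyps(1)] by (simp add: in_arcs_iff)
  then show ?case by blast
qed

lemma
  assumes "x \<in> V" and "x \<noteq> e"
  shows orig_ancestor: "(orig par e D x, x) \<in> T\<^sup>+"
    and orig_mem: "orig par e D x \<in> D \<union> {e}"
    and orig_nearest: "\<And>y. (y, x) \<in> T\<^sup>+ \<Longrightarrow> (orig par e D x, y) \<in> T\<^sup>+ \<Longrightarrow> y \<notin> D \<union> {e}"
proof -
  define P where "P k \<longleftrightarrow> k \<ge> 1 \<and> (par ^^ k) x \<in> D \<union> {e}" for k
  define m where "m = (LEAST k. P k)"
  have orig: "orig par e D x = (par ^^ m) x" unfolding orig_def m_def P_def by simp
  have "P (depth par e x)"
    using depth_par[OF assms] par_iterate_depth[OF assms(1)] by (simp add: P_def)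
  then have "P m" and "m \<le> depth par e x" unfolding m_def by (auto intro: LeastI Least_le)
  then have "((par ^^ m) x, x) \<in> T\<^sup>*" and depth_m: "depth par e ((par ^^ m) x) + m = depth par e x"
    using par_iterate_ancestor[OF assms(1)] by auto
  moreover have "(par ^^ m) x \<noteq> x" using depth_m \<open>P m\<close> by (auto simp: P_def)
  ultimately show "(orig par e D x, x) \<in> T\<^sup>+" by (auto simp: orig dest: rtranclD)
  show "orig par e D x \<in> D \<union> {e}" using \<open>P m\<close> by (simp add: orig P_def)
  fix y assume yx: "(y, x) \<in> T\<^sup>+" and oy: "(orig par e D x, y) \<in> T\<^sup>+"
  obtain j where j: "y = (par ^^ j) x" "depth par e y + j = depth par e x"
    using ancestor_par_iterate[OF trancl_into_rtrancl[OF yx]] by auto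
  have "1 \<le> j" using j depth_less[OF yx] by simp
  moreover have "j < m" using j depth_m depth_less[OF oy] by (simp add: orig)
  then have "\<not> P j" unfolding m_def by (rule not_less_Least)
  ultimately show "y \<notin> D \<union> {e}" using j by (simp add: P_def)
qed

lemma subtree_antimono: "(w, w') \<in> T\<^sup>* \<Longrightarrow> A w' \<subseteq> A w"
  by (auto simp: subtree_def)

definition between :: "'a \<Rightarrow> 'a \<Rightarrow> 'a set" where
  "between w x = {y. (w, y) \<in> T\<^sup>* \<and> (y, x) \<in> T\<^sup>+}"

lemma between_subset_subtree: "between w x \<subseteq> A w"
  by (auto simp: between_def subtree_def)

lemma orig_above_iff:
  assumes "x \<in> V" and "x \<noteq> e" and "w \<noteq> e" and wx: "(w, x) \<in> T\<^sup>*"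
  shows "(orig par e D x, w) \<in> T\<^sup>+ \<longleftrightarrow> D \<inter> between w x = {}"
proof
  assume "(orig par e D x, w) \<in> T\<^sup>+"
  then have "(orig par e D x, y) \<in> T\<^sup>+" if "y \<in> between w x" for y
    using that trancl_rtrancl_trancl by (auto simp: between_def)
  then show "D \<inter> between w x = {}"
    using orig_nearest[OF assms(1,2)] by (auto simp: between_def)
next
  assume no_D: "D \<inter> between w x = {}"
  have "(w, orig par e D x) \<notin> T\<^sup>*"
  proof
    assume "(w, orig par e D x) \<in> T\<^sup>*"
    then have "orig par e D x = e"
      using no_D orig_ancestor[OF assms(1,2)] orig_mem[OF assms(1,2)] by (auto simp: between_def)
    then show False using \<open>(w, orig par e D x) \<in> T\<^sup>*\<close> ancestor_of_root \<open>w \<noteq> e\<close> by simp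
  qed
  then show "(orig par e D x, w) \<in> T\<^sup>+"
    using arcs_ancestors_comparable[OF trancl_into_rtrancl[OF orig_ancestor[OF assms(1,2), of D]] wx]
    by (auto dest: rtranclD)
qed

definition paths_through :: "'a set \<Rightarrow> 'a set \<Rightarrow> 'a \<Rightarrow> 'a set" where
  "paths_through R D w = {x \<in> (R \<union> D) - {e}. x \<in> A w \<and> D \<inter> between w x = {}}"

lemma path_number_eq_card_paths_through:
  assumes "w \<in> V" and "w \<noteq> e"
  shows "path_number V par e R D w = card (paths_through R D w)"
proof -
  have "(orig par e D x, w) \<in> T\<^sup>+ \<longleftrightarrow> D \<inter> between w x = {}" if "x \<in> A w" and "x \<noteq> e" for x
  proof (rule orig_above_iff)
    show "x \<in> V" using subtree_subset assms(1) \<open>x \<in> A w\<close> by blast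
    show "(w, x) \<in> T\<^sup>*" using \<open>x \<in> A w\<close> by (simp add: subtree_def)
  qed (use that assms(2) in auto)
  then have "{x \<in> (R \<union> D) - {e}. x \<in> A w \<and> (orig par e D x, w) \<in> T\<^sup>+} = paths_through R D w"
    unfolding paths_through_def by auto
  then show ?thesis by (simp add: path_number_def)
qed

lemma paths_through_local:
  assumes "D1 \<inter> A w = D2 \<inter> A w"
  shows "paths_through R D1 w = paths_through R D2 w"
proof -
  have "D1 \<inter> between w x = D2 \<inter> between w x" for x
    using assms between_subset_subtree by blast
  then show ?thesis
    using assms unfolding paths_through_def by blast
qed

lemma path_number_local:
  assumes "w \<in> V" and "w \<noteq> e" and "D1 \<inter> A w = D2 \<inter> A w"
  shows "path_number V par e R D1 w = path_number V par e R D2 w"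
  using assms paths_through_local[OF assms(3)] by (simp add: path_number_eq_card_paths_through)

lemma load_local:
  assumes "u \<in> V" and "u \<noteq> e" and "D1 \<inter> A u = D2 \<inter> A u"
  shows "load V par e R D1 u = load V par e R D2 u"
  unfolding load_def
proof (rule sum.cong)
  fix w assume "w \<in> A u"
  then have "A w \<subseteq> A u" and "w \<in> V" and "w \<noteq> e"
    using subtree_antimono[of u w] subtree_subset[OF assms(1)] root_not_in_subtree[OF assms(2)]
    by (auto simp: subtree_def)
  then show "path_number V par e R D1 w = path_number V par e R D2 w"
    using path_number_local assms(3) by blast
qed simp

lemma subtrees_disjoint:
  assumes "(v, w) \<notin> T\<^sup>*" and "(w, v) \<notin> T\<^sup>*"
  shows "A v \<inter> A w = {}"
proof -
  have False if "(v, x) \<in> T\<^sup>*" and "(w, x) \<in> T\<^sup>*" for x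
    using arcs_ancestors_comparable[OF that] assms by blast
  then show ?thesis by (auto simp: subtree_def)
qed

lemma child_arc: "v \<in> children V par e u \<Longrightarrow> (u, v) \<in> T"
  by (auto simp: children_def in_arcs_iff)

lemma subtree_child_subset: "v \<in> children V par e u \<Longrightarrow> A v \<subseteq> A u"
  using child_arc subtree_antimono by blast

lemma parent_notin_subtree_child:
  assumes "v \<in> children V par e u"
  shows "u \<notin> A v"
proof
  assume "u \<in> A v"
  then have "u = v" using ancestor_antisym child_arc[OF assms] by (auto simp: subtree_def)
  then show False using depth_arc[OF child_arc[OF assms]] by simp
qed

lemma ancestor_of_child:
  assumes "v \<in> children V par e u" and "(w, v) \<in> T\<^sup>*"
  shows "w = v \<or> (w, u) \<in> T\<^sup>*"
  using assms(2)
proof (cases rule: rtranclE)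
  case (step z)
  then have "z = u" using assms(1) by (auto simp: children_def in_arcs_iff)
  then show ?thesis using step by simp
qed simp

lemma between_parent:
  assumes "v \<in> children V par e u" and vx: "(v, x) \<in> T\<^sup>*"
  shows "between u x = insert u (between v x)"
proof (intro equalityI subsetI)
  have uv: "(u, v) \<in> T" using child_arc[OF assms(1)] .
  fix y
  assume "y \<in> between u x"
  then have uy: "(u, y) \<in> T\<^sup>*" and yx: "(y, x) \<in> T\<^sup>+" by (simp_all add: between_def)
  have "(y, v) \<in> T\<^sup>* \<or> (v, y) \<in> T\<^sup>*"
    using arcs_ancestors_comparable[OF trancl_into_rtrancl[OF yx] vx] .
  moreover have "y = u" if "(y, v) \<in> T\<^sup>*" "(v, y) \<notin> T\<^sup>*"
  proof -
    have "(y, u) \<in> T\<^sup>*" using ancestor_of_child[OF assms(1) that(1)] that(2) by blast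
    then show "y = u" using ancestor_antisym uy by blast
  qed
  ultimately show "y \<in> insert u (between v x)" using yx by (auto simp: between_def)
next
  have uv: "(u, v) \<in> T" using child_arc[OF assms(1)] .
  fix y
  assume "y \<in> insert u (between v x)"
  then show "y \<in> between u x"
    using rtrancl_into_trancl2[OF uv vx] converse_rtrancl_into_rtrancl[OF uv]
    by (auto simp: between_def)
qed

lemma paths_through_parent_inside:
  assumes "v \<in> children V par e u"
  shows "paths_through R D u \<inter> A v = (if u \<in> D then {} else paths_through R D v)"
proof (rule set_eqI)
  fix x
  show "x \<in> paths_through R D u \<inter> A v \<longleftrightarrow> x \<in> (if u \<in> D then {} else paths_through R D v)"
  proof (cases "x \<in> A v")
    case True
    then have "x \<in> A u" and "between u x = insert u (between v x)"
      using subtree_child_subset[OF assms] between_parent[OF assms] by (auto simp: subtree_def)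
    then show ?thesis using True by (auto simp: paths_through_def)
  qed (auto simp: paths_through_def)
qed

lemma between_disjoint_subtree: "x \<notin> A v \<Longrightarrow> between w x \<inter> A v = {}"
  by (auto simp: between_def subtree_def intro: rtrancl_trans trancl_into_rtrancl)

lemma paths_through_outside:
  assumes "D1 - A v = D2 - A v"
  shows "paths_through R D1 w - A v = paths_through R D2 w - A v"
proof -
  have "D1 \<inter> between w x = D2 \<inter> between w x" if "x \<notin> A v" for x
    using assms between_disjoint_subtree[OF that] by blast
  then show ?thesis
    using assms unfolding paths_through_def by blast
qed

lemma path_number_parent:
  assumes "u \<in> V" and "u \<noteq> e" and v: "v \<in> children V par e u"
    and outside: "D1 - A v = D2 - A v"
    and pn_v: "path_number V par e R D1 v = path_number V par e R D2 v"
  shows "path_number V par e R D1 u = path_number V par e R D2 u"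
proof -
  have "v \<in> V" and "v \<noteq> e" using v by (auto simp: children_def)
  have "u \<in> D1 \<longleftrightarrow> u \<in> D2" using outside parent_notin_subtree_child[OF v] by blast
  then have inside: "card (paths_through R D1 u \<inter> A v) = card (paths_through R D2 u \<inter> A v)"
    using pn_v paths_through_parent_inside[OF v]
    by (simp add: path_number_eq_card_paths_through[OF \<open>v \<in> V\<close> \<open>v \<noteq> e\<close>])
  have "finite (paths_through R D u)" for D
    using finite_subtree[OF assms(1)] by (rule rev_finite_subset) (auto simp: paths_through_def)
  then show ?thesis
    using inside paths_through_outside[OF outside, of R u]
      card_Int_Diff[of "paths_through R D1 u" "A v"] card_Int_Diff[of "paths_through R D2 u" "A v"]
    by (simp add: path_number_eq_card_paths_through[OF assms(1,2)])
qed

lemma subtree_disjoint_sibling_subtree: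
  assumes v: "v \<in> children V par e u" and w: "w \<in> A u - A v" and "w \<noteq> u"
  shows "A w \<inter> A v = {}"
proof (rule subtrees_disjoint)
  show "(w, v) \<notin> T\<^sup>*"
  proof
    assume "(w, v) \<in> T\<^sup>*"
    then have "(w, u) \<in> T\<^sup>*" using ancestor_of_child[OF v] w by (auto simp: subtree_def)
    then show False using ancestor_antisym \<open>w \<noteq> u\<close> w by (auto simp: subtree_def)
  qed
  show "(v, w) \<notin> T\<^sup>*" using w by (simp add: subtree_def)
qed

lemma load_parent:
  assumes "u \<in> V" and "u \<noteq> e" and v: "v \<in> children V par e u"
    and outside: "D1 - A v = D2 - A v"
    and pn_v: "path_number V par e R D1 v = path_number V par e R D2 v"
  shows "load V par e R D1 u + load V par e R D2 v = load V par e R D2 u + load V par e R D1 v"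
proof -
  have split: "load V par e R D u = sum (path_number V par e R D) (A u - A v) + load V par e R D v"
    for D
    unfolding load_def
    using sum.subset_diff[OF subtree_child_subset[OF v] finite_subtree[OF assms(1)]] by simp
  have "path_number V par e R D1 w = path_number V par e R D2 w" if w: "w \<in> A u - A v" for w
  proof (cases "w = u")
    case True
    then show ?thesis using path_number_parent[OF assms] by simp
  next
    case False
    have "w \<in> V" and "w \<noteq> e"
      using w subtree_subset[OF assms(1)] root_not_in_subtree[OF assms(2)] by auto
    moreover have "D1 \<inter> A w = D2 \<inter> A w"
      using outside subtree_disjoint_sibling_subtree[OF v w False] by blast
    ultimately show ?thesis by (rule path_number_local)
  qed
  then show ?thesis using split[of D1] split[of D2] by simp
qed

lemma splice_improves_parent:
  assumes "u \<in> V" and "u \<noteq> e" and v: "v \<in> children V par e u"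
    and pn_v: "path_number V par e R D' v = path_number V par e R D v"
    and card_v: "card (D' \<inter> A v) = card (D \<inter> A v)"
    and load_v: "load V par e R D' v < load V par e R D v"
  defines "D'' \<equiv> (D - A v) \<union> (D' \<inter> A v)"
  shows "path_number V par e R D'' u = path_number V par e R D u"
    and "card (D'' \<inter> A u) = card (D \<inter> A u)"
    and "load V par e R D'' u < load V par e R D u"
proof -
  have "v \<in> V" and "v \<noteq> e" using v by (auto simp: children_def)
  have outside: "D'' - A v = D - A v" and inside: "D'' \<inter> A v = D' \<inter> A v"
    by (auto simp: D''_def)
  have pn_v'': "path_number V par e R D'' v = path_number V par e R D v"
    using path_number_local[OF \<open>v \<in> V\<close> \<open>v \<noteq> e\<close> inside] pn_v by simp
  show "path_number V par e R D'' u = path_number V par e R D u"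
    using path_number_parent[OF assms(1-3) outside pn_v''] .
  show "card (D'' \<inter> A u) = card (D \<inter> A u)"
    using card_Int_agree_outside[OF finite_subtree[OF assms(1)] subtree_child_subset[OF v] outside]
      inside card_v by simp
  show "load V par e R D'' u < load V par e R D u"
    using load_parent[OF assms(1-3) outside pn_v'']
      load_local[OF \<open>v \<in> V\<close> \<open>v \<noteq> e\<close> inside] load_v by simp
qed

lemma sub_optimal_child:
  assumes "u \<in> V" and "u \<noteq> e" and "D \<subseteq> V" and opt_u: "sub_optimal V par e R D u"
    and v: "v \<in> children V par e u"
  shows "sub_optimal V par e R D v"
  unfolding sub_optimal_iff
proof (intro allI impI, elim conjE)
  fix D' assume "D' \<subseteq> V"
    and pn_v: "path_number V par e R D' v = path_number V par e R D v"
    and card_v: "card (D' \<inter> A v) = card (D \<inter> A v)"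
  show "load V par e R D v \<le> load V par e R D' v"
  proof (rule ccontr)
    assume "\<not> ?thesis"
    then have "load V par e R D' v < load V par e R D v" by simp
    note splice = splice_improves_parent[OF assms(1,2) v pn_v card_v this]
    have "(D - A v) \<union> (D' \<inter> A v) \<subseteq> V" using \<open>D \<subseteq> V\<close> \<open>D' \<subseteq> V\<close> by blast
    from opt_u[unfolded sub_optimal_iff, rule_format, OF this conjI[OF splice(1,2)]]
    show False using splice(3) by simp
  qed
qed

end

theorem mainTheorem3:
  fixes V :: "'a set" and par :: "'a \<Rightarrow> 'a" and e u :: 'a and R D :: "'a set"
  assumes "rooted_tree V par e"
    and "R \<subseteq> V" and "leaves V par e \<subseteq> R"
    and "u \<in> V" and "u \<noteq> e"
    and "D \<subseteq> V"
    and "sub_optimal V par e R D u"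
  shows "\<forall>v \<in> children V par e u. sub_optimal V par e R D v"
proof -
  interpret multicast_tree V par e by (rule multicast_tree.intro) fact
  show ?thesis using sub_optimal_child[OF assms(4-7)] by blast
qed

end
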